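(* Fix $\mathbf{s} \in \mathcal{S}$. Then, for any decreasing positive sequence $\{\epsilon_l : l \in \mathbb{N}\}$ with $\lim_{l \to \infty} \epsilon_l = 0$, we have $\lim_{l \to \infty} \bar{\mathbf{p}}^{\epsilon_l}(\mathbf{s}) = \bar{\mathbf{p}}(\mathbf{s})$.
   Context: There are $N$ systems $\mathcal{A} = \{1,\ldots,N\}$. $B = [b_{i,j}]$ is a nonnegative $N\times N$ matrix with $b_{i,j} = \beta_{j,i} \ge 0$, $\beta_{i,i}=0$; the directed graph with an edge $(i,j)$ iff $\beta_{i,j}>0$ is weakly connected (not necessarily strongly connected). $\boldsymbol{\lambda} \in \mathbb{R}_+^N$ is the vector of external attack rates (some entries may be zero), $\boldsymbol{\delta} > \mathbf{0}$ the recovery rates, and $\mathbf{q}(\mathbf{s}) = (q_i(s_i))_i$ the breach probabilities with each $q_i:\mathbb{R}_+\to(0,1]$ decreasing, strictly convex, continuously differentiable; $\mathcal{S}\subset\mathbb{R}_+^N$ is convex. The state evolves by $\dot{\mathbf{p}}(t) = (\mathbf{1} - \mathbf{p}(t)) \circ \mathbf{q}(\mathbf{s}) \circ (\boldsymbol{\lambda} + B \mathbf{p}(t)) - \boldsymbol{\delta} \circ \mathbf{p}(t)$ ($\circ$ elementwise), and for fixed $\mathbf{s}$ this system has a unique stable equilibrium $\bar{\mathbf{p}}(\mathbf{s})$, which satisfies $(\mathbf{1} - \mathbf{p}) \circ (\boldsymbol{\lambda} + B \mathbf{p}) - \mathbf{q}(\mathbf{s})^{-1} \circ \boldsymbol{\delta}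 \circ \mathbf{p} = \mathbf{0}$ (this equation may have multiple solutions). For $\epsilon>0$, $\bar{\mathbf{p}}^{\epsilon}(\mathbf{s}) > \mathbf{0}$ is the unique strictly positive solution of the same equation with $\boldsymbol{\lambda}$ replaced by $\boldsymbol{\lambda}^{\epsilon} := \boldsymbol{\lambda} + \epsilon\mathbf{1}$. *)

theory Defs
  imports "HOL-Analysis.Analysis"
begin

text \<open>Vectors indexed by the finite type 'n (the systems 1..N).
  Matrix B: B $ i $ j = b_{i,j} = beta_{j,i}.\<close>

definition strictly_convex_on :: "real set \<Rightarrow> (real \<Rightarrow> real) \<Rightarrow> bool" where
  "strictly_convex_on A f \<longleftrightarrow>
     (\<forall>x\<in>A. \<forall>y\<in>A. \<forall>u::real. x \<noteq> y \<and> 0 < u \<and> u < 1 \<longrightarrow>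
        f (u * x + (1 - u) * y) < u * f x + (1 - u) * f y)"

definition weakly_connected :: "real^'n^'n \<Rightarrow> bool" where
  "weakly_connected B \<longleftrightarrow>
     (let E = {(i,j). B $ j $ i > 0} in \<forall>i j. (i, j) \<in> (E \<union> E\<inverse>)\<^sup>*)"

definition field ::
  "real^'n^'n \<Rightarrow> real^'n \<Rightarrow> real^'n \<Rightarrow> ('n \<Rightarrow> real \<Rightarrow> real) \<Rightarrow> real^'n \<Rightarrow> real^'n \<Rightarrow> real^'n" where
  "field B lam delta q s p =
     (\<chi> i. (1 - p $ i) * q i (s $ i) * (lam $ i + (B *v p) $ i) - delta $ i * p $ i)"

definition unit_cube :: "(real^'n) set" where
  "unit_cube = {p. \<forall>i. 0 \<le> p $ i \<and> p $ i \<le> 1}"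

definition is_solution :: "(real^'n \<Rightarrow> real^'n) \<Rightarrow> (real \<Rightarrow> real^'n) \<Rightarrow> bool" where
  "is_solution F x \<longleftrightarrow>
     (\<forall>t\<ge>0. (x has_vector_derivative F (x t)) (at t within {0..}))"

definition stable_equilibrium :: "(real^'n \<Rightarrow> real^'n) \<Rightarrow> real^'n \<Rightarrow> bool" where
  "stable_equilibrium F p \<longleftrightarrow>
     p \<in> unit_cube \<and> F p = 0 \<and>
     (\<forall>e>0. \<exists>d>0. \<forall>x. is_solution F x \<and> x 0 \<in> unit_cube \<and> dist (x 0) p < d
                    \<longrightarrow> (\<forall>t\<ge>0. dist (x t) p < e)) \<and>
     (\<exists>d>0. \<forall>x. is_solution F x \<and> x 0 \<in> unit_cube \<and> dist (x 0) p < d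
                 \<longrightarrow> (x \<longlongrightarrow> p) at_top)"

definition pbar :: "real^'n^'n \<Rightarrow> real^'n \<Rightarrow> real^'n \<Rightarrow> ('n \<Rightarrow> real \<Rightarrow> real) \<Rightarrow> real^'n \<Rightarrow> real^'n" where
  "pbar B lam delta q s = (THE p. stable_equilibrium (field B lam delta q s) p)"

definition eq_map ::
  "real^'n^'n \<Rightarrow> real^'n \<Rightarrow> real^'n \<Rightarrow> ('n \<Rightarrow> real \<Rightarrow> real) \<Rightarrow> real^'n \<Rightarrow> real^'n \<Rightarrow> real^'n" where
  "eq_map B lam delta q s p =
     (\<chi> i. (1 - p $ i) * (lam $ i + (B *v p) $ i) - delta $ i / q i (s $ i) * p $ i)"

definition pbar_eps ::
  "real^'n^'n \<Rightarrow> real^'n \<Rightarrow> real^'n \<Rightarrow> ('n \<Rightarrow> real \<Rightarrow> real) \<Rightarrow> real^'n \<Rightarrow> real \<Rightarrow> real^'n" where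
  "pbar_eps B lam delta q s eps =
     (THE p. (\<forall>i. p $ i > 0) \<and> eq_map B (lam + eps *\<^sub>R 1) delta q s p = 0)"

end

(*
  For e > 0 the positive equilibria p_eps e, for the external rate lam + e, increase with e,
  and a maximum-ratio comparison even gives p_eps e <= (e / e') p_eps e' for e' <= e.  Hence
  p_eps e converges, as e decreases to 0, to an equilibrium p_lim of the original system, and as
  pbar is the unique stable equilibrium it suffices to show that p_lim is stable.

  The system is cooperative, and its field is negative in every coordinate at p_eps a and
  positive at tau p_lim (0 < tau < 1) on the support of p_lim.  So the order intervals
  [tau p_lim, p_eps a] are forward invariant (a barrier argument at the first exit time), and
  they form a neighbourhood basis of p_lim within the unit cube: this is Lyapunov stability.
  Since the field points inwards uniformly on their faces, a trajectory in one such interval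
  enters every smaller one after finitely many steps of fixed length: this is attractivity.
*)
theory Submission
  imports Defs
begin

section \<open>Barrier arguments\<close>

lemma eventually_nonpos_at_right:
  fixes \<phi> :: "real \<Rightarrow> real"
  assumes deriv: "(\<phi> has_real_derivative D) (at m within {t0..})" and "t0 \<le> m"
    and nonpos: "\<phi> m \<le> 0" and exit: "\<phi> m = 0 \<Longrightarrow> D < 0"
  shows "\<forall>\<^sub>F u in at_right m. \<phi> u \<le> 0"
proof (cases "\<phi> m = 0")
  case True
  then obtain d where "d > 0" and d: "\<And>h. 0 < h \<Longrightarrow> h < d \<Longrightarrow> \<phi> (m + h) < 0"
    using has_real_derivative_neg_dec_right[OF deriv exit] \<open>t0 \<le> m\<close> by auto
  show ?thesis
    unfolding eventually_at_right_field
    using \<open>d > 0\<close> d[of "_ - m"] by (intro exI[of _ "m + d"]) force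
next
  case False
  have "at_right m \<le> at m within {t0..}"
    using \<open>t0 \<le> m\<close> by (intro at_le) auto
  then have "(\<phi> \<longlongrightarrow> \<phi> m) (at_right m)"
    using DERIV_continuous[OF deriv] unfolding continuous_within by (rule tendsto_mono)
  moreover have "\<phi> m < 0" using nonpos False by simp
  ultimately have "\<forall>\<^sub>F u in at_right m. \<phi> u < 0" by (rule order_tendstoD(2))
  then show ?thesis by eventually_elim simp
qed

lemma nonpos_at_left_limit:
  fixes \<phi> :: "real \<Rightarrow> real"
  assumes cont: "continuous (at m within {t0..}) \<phi>" and "t0 \<le> m"
    and init: "\<phi> t0 \<le> 0" and before: "\<And>u. t0 \<le> u \<Longrightarrow> u < m \<Longrightarrow> \<phi> u \<le> 0"
  shows "\<phi> m \<le> 0"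
proof (cases "m = t0")
  case False
  with \<open>t0 \<le> m\<close> have "at_left m = at m within {t0..m}"
    by (simp add: at_within_Icc_at_left)
  also have "\<dots> \<le> at m within {t0..}" by (rule at_le) auto
  finally have "(\<phi> \<longlongrightarrow> \<phi> m) (at_left m)"
    using cont unfolding continuous_within by (rule tendsto_mono)
  moreover have "\<forall>\<^sub>F u in at_left m. \<phi> u \<le> 0"
    using False \<open>t0 \<le> m\<close> before
    by (subst eventually_at_left[of t0]) (auto intro!: exI[of _ t0])
  ultimately show ?thesis by (rule tendsto_upperbound) simp
qed (use init in simp)

lemma nonpos_forward_invariant:
  fixes \<phi> \<phi>' :: "'k \<Rightarrow> real \<Rightarrow> real"
  assumes "finite K"
    and deriv: "\<And>k t. k \<in> K \<Longrightarrow> t0 \<le> t \<Longrightarrow> (\<phi> k has_real_derivative \<phi>' k t) (at t within {t0..})"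
    and init: "\<And>k. k \<in> K \<Longrightarrow> \<phi> k t0 \<le> 0"
    and exit: "\<And>k t. k \<in> K \<Longrightarrow> t0 \<le> t \<Longrightarrow> t < T \<Longrightarrow> \<forall>j\<in>K. \<phi> j t \<le> 0 \<Longrightarrow> \<phi> k t = 0 \<Longrightarrow> \<phi>' k t < 0"
    and "k \<in> K" "t0 \<le> t" "t \<le> T"
  shows "\<phi> k t \<le> 0"
proof (rule ccontr)
  define S where "S = {u. t0 \<le> u \<and> u \<le> T \<and> (\<exists>j\<in>K. 0 < \<phi> j u)}"
  define m where "m = Inf S"
  assume "\<not> \<phi> k t \<le> 0"
  with assms have "t \<in> S" by (force simp: S_def)
  have "bdd_below S" by (rule bdd_belowI[of _ t0]) (auto simp: S_def)
  have "t0 \<le> m"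
    unfolding m_def using \<open>t \<in> S\<close> by (intro cInf_greatest) (auto simp: S_def)
  have "m \<le> t"
    unfolding m_def by (rule cInf_lower[OF \<open>t \<in> S\<close> \<open>bdd_below S\<close>])
  have before: "\<phi> j u \<le> 0" if "j \<in> K" "t0 \<le> u" "u < m" for j u
  proof -
    have "u \<notin> S"
      using cInf_lower[OF _ \<open>bdd_below S\<close>, of u] \<open>u < m\<close> by (auto simp: m_def)
    with that \<open>m \<le> t\<close> \<open>t \<le> T\<close> show ?thesis by (auto simp: S_def not_less)
  qed
  have at_m: "\<phi> j m \<le> 0" if "j \<in> K" for j
    using DERIV_continuous[OF deriv[OF that \<open>t0 \<le> m\<close>]] \<open>t0 \<le> m\<close> init[OF that] before[OF that]
    by (rule nonpos_at_left_limit)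
  then have "m \<notin> S" by (auto simp: S_def dest: leD)
  with \<open>t \<in> S\<close> \<open>m \<le> t\<close> have "m < t" by (cases "m = t") auto
  have "\<forall>\<^sub>F u in at_right m. \<forall>j\<in>K. \<phi> j u \<le> 0"
    using \<open>finite K\<close>
  proof (rule eventually_ball_finite, intro ballI)
    fix j assume "j \<in> K"
    show "\<forall>\<^sub>F u in at_right m. \<phi> j u \<le> 0"
    proof (rule eventually_nonpos_at_right[OF deriv[OF \<open>j \<in> K\<close> \<open>t0 \<le> m\<close>] \<open>t0 \<le> m\<close>])
      show "\<phi> j m \<le> 0" using at_m \<open>j \<in> K\<close> .
      show "\<phi>' j m < 0" if "\<phi> j m = 0"
        using exit[OF \<open>j \<in> K\<close> \<open>t0 \<le> m\<close> _ _ that] at_m \<open>m < t\<close> \<open>t \<le> T\<close> by auto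
    qed
  qed
  then obtain b where "m < b" and b: "\<And>u. m < u \<Longrightarrow> u < b \<Longrightarrow> \<forall>j\<in>K. \<phi> j u \<le> 0"
    unfolding eventually_at_right_field by blast
  obtain u where "u \<in> S" "u < min b t"
    using cInf_lessD[of S "min b t"] \<open>t \<in> S\<close> \<open>m < b\<close> \<open>m < t\<close> by (auto simp: m_def)
  moreover have "m < u"
    using \<open>u \<in> S\<close> \<open>m \<notin> S\<close> cInf_lower[OF \<open>u \<in> S\<close> \<open>bdd_below S\<close>]
    by (cases "u = m") (auto simp: m_def)
  ultimately show False using b by (force simp: S_def)
qed

lemma nonpos_forward_invariant_scalar:
  fixes f f' :: "real \<Rightarrow> real"
  assumes deriv: "\<And>t. t0 \<le> t \<Longrightarrow> (f has_real_derivative f' t) (at t within {t0..})"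
    and init: "f t0 \<le> 0"
    and exit: "\<And>t. t0 \<le> t \<Longrightarrow> t < T \<Longrightarrow> f t = 0 \<Longrightarrow> f' t < 0"
    and "t0 \<le> t" "t \<le> T"
  shows "f t \<le> 0"
  using nonpos_forward_invariant[of "{()}" t0 "\<lambda>_. f" "\<lambda>_. f'" T "()" t] assms by auto

text \<open>The moving barrier U - c/2 (t - t0) reaches U - \<rho> at time t0 + 2 \<rho>/c, and f cannot
  catch up with it because f falls at rate c near it.\<close>
lemma drift_below:
  fixes f f' :: "real \<Rightarrow> real"
  assumes deriv: "\<And>t. t0 \<le> t \<Longrightarrow> (f has_real_derivative f' t) (at t within {t0..})"
    and bound: "\<And>t. t0 \<le> t \<Longrightarrow> f t \<le> U"
    and drift: "\<And>t. t0 \<le> t \<Longrightarrow> U - \<rho> \<le> f t \<Longrightarrow> f' t \<le> - c"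
    and "0 < \<rho>" "0 < c" and late: "t0 + 2 * \<rho> / c \<le> t"
  shows "f t \<le> U - \<rho>"
proof -
  define t1 where "t1 = t0 + 2 * \<rho> / c"
  have "t0 \<le> t1" using \<open>0 < \<rho>\<close> \<open>0 < c\<close> by (simp add: t1_def)
  have "f t1 - (U - c / 2 * (t1 - t0)) \<le> 0"
  proof (rule nonpos_forward_invariant_scalar[where f = "\<lambda>t. f t - (U - c / 2 * (t - t0))"
        and f' = "\<lambda>t. f' t + c / 2" and T = t1])
    show "((\<lambda>t. f t - (U - c / 2 * (t - t0))) has_real_derivative f' t + c / 2)
        (at t within {t0..})"
      if "t0 \<le> t" for t
      using deriv[OF that] by (auto intro!: derivative_eq_intros)
    show "f' t + c / 2 < 0" if "t0 \<le> t" "t < t1" "f t - (U - c / 2 * (t - t0)) = 0" for t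
    proof -
      have "c / 2 * (t - t0) \<le> \<rho>"
        using that \<open>0 < c\<close> by (simp add: t1_def field_simps)
      then show ?thesis using drift[OF \<open>t0 \<le> t\<close>] that \<open>0 < c\<close> by simp
    qed
  qed (use bound \<open>t0 \<le> t1\<close> in auto)
  then have "f t1 \<le> U - \<rho>" using \<open>0 < c\<close> by (simp add: t1_def)
  have "f t - (U - \<rho>) \<le> 0"
  proof (rule nonpos_forward_invariant_scalar[of t1 "\<lambda>t. f t - (U - \<rho>)" f' t t])
    show "((\<lambda>t. f t - (U - \<rho>)) has_real_derivative f' u) (at u within {t1..})" if "t1 \<le> u" for u
      using DERIV_subset[OF deriv, of u "{t1..}"] that \<open>t0 \<le> t1\<close>
      by (auto intro!: derivative_eq_intros)
    show "f' u < 0" if "t1 \<le> u" "f u - (U - \<rho>) = 0" for u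
      using drift[of u] that \<open>t0 \<le> t1\<close> \<open>0 < c\<close> by force
  qed (use \<open>f t1 \<le> U - \<rho>\<close> late in \<open>auto simp: t1_def\<close>)
  then show ?thesis by simp
qed

lemma uniform_steps_reach:
  fixes P :: "real \<Rightarrow> real \<Rightarrow> bool"
  assumes "0 < d" "a \<le> b" "P a t"
    and step: "\<And>c t. a \<le> c \<Longrightarrow> c < b \<Longrightarrow> P c t \<Longrightarrow> \<exists>t'. P (min b (c + d)) t'"
  shows "\<exists>t. P b t"
proof -
  have "\<exists>t. P (min b (a + real n * d)) t" for n
  proof (induction n)
    case 0
    then show ?case using assms by (auto simp: min_def)
  next
    case (Suc n)
    then obtain t where t: "P (min b (a + real n * d)) t" by blast
    show ?case
    proof (cases "a + real n * d < b")
      case True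
      then show ?thesis
        using step[of "a + real n * d" t] t \<open>0 < d\<close> by (simp add: algebra_simps)
    next
      case False
      then show ?thesis using t \<open>0 < d\<close> by (auto simp: min_def algebra_simps)
    qed
  qed
  moreover obtain n where "(b - a) / d < real n" using reals_Archimedean2 by blast
  then have "min b (a + real n * d) = b" using \<open>0 < d\<close> by (simp add: field_simps)
  ultimately show ?thesis by metis
qed

lemma is_solution_nth_deriv:
  assumes "is_solution F x" "0 \<le> t0" "t0 \<le> t"
  shows "((\<lambda>t. x t $ i) has_real_derivative F (x t) $ i) (at t within {t0..})"
proof -
  have "(x has_vector_derivative F (x t)) (at t within {0..})"
    using assms unfolding is_solution_def by auto
  from bounded_linear.has_vector_derivative[OF bounded_linear_vec_nth this, of i]
  have "((\<lambda>t. x t $ i) has_real_derivative F (x t) $ i) (at t within {0..})"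
    by (simp add: has_real_derivative_iff_has_vector_derivative)
  then show ?thesis by (rule DERIV_subset) (use assms in auto)
qed

section \<open>Equilibria\<close>

lemma nonneg_matrix_vector_mono:
  fixes B :: "real^'n^'m"
  assumes "\<And>i j. 0 \<le> B $ i $ j" and "\<And>j. x $ j \<le> y $ j"
  shows "(B *v x) $ i \<le> (B *v y) $ i"
  unfolding matrix_vector_mult_def using assms by (auto intro!: sum_mono mult_left_mono)

lemma nonneg_matrix_vector_nonneg:
  fixes B :: "real^'n^'m"
  assumes "\<And>i j. 0 \<le> B $ i $ j" and "\<And>j. 0 \<le> x $ j"
  shows "0 \<le> (B *v x) $ i"
  using nonneg_matrix_vector_mono[of B 0 x i] assms by simp

lemma dist_le_dist_corners:
  fixes y p lo hi :: "real^'n"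
  assumes "\<And>i. lo $ i \<le> y $ i \<and> y $ i \<le> hi $ i" and "\<And>i. lo $ i \<le> p $ i \<and> p $ i \<le> hi $ i"
  shows "dist y p \<le> dist hi lo"
  unfolding dist_norm
proof (rule norm_le_componentwise_cart)
  fix i
  show "norm ((y - p) $ i) \<le> norm ((hi - lo) $ i)"
    using assms(1)[of i] assms(2)[of i] by (simp; linarith)
qed

lemma finite_pos_lower_bound:
  fixes f :: "'a \<Rightarrow> real"
  assumes "finite A" and "\<And>x. x \<in> A \<Longrightarrow> 0 < f x"
  obtains c where "0 < c" and "\<And>x. x \<in> A \<Longrightarrow> c \<le> f x"
proof
  show "0 < Min (insert 1 (f ` A))" using assms by simp
  show "Min (insert 1 (f ` A)) \<le> f x" if "x \<in> A" for x using assms that by simp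
qed

text \<open>The comparison of two equilibria, for the external rates e and e', at a coordinate where
  their ratio \<theta> is maximal.\<close>
lemma max_ratio_le:
  fixes A C E r p \<theta> e e' :: real
  assumes "0 \<le> A" "0 \<le> C" "0 \<le> E" "E \<le> \<theta> * C" "0 < r" "0 < p" "1 < \<theta>" "0 < e'" "0 \<le> e"
    and eq_x: "(1 - \<theta> * p) * (A + e + E) = r * (\<theta> * p)"
    and eq_p: "(1 - p) * (A + e' + C) = r * p"
  shows "\<theta> \<le> e / e'"
proof -
  have "0 < \<theta> * p" using assms by simp
  have "0 < 1 - \<theta> * p"
  proof (rule ccontr)
    assume "\<not> ?thesis"
    then have "(1 - \<theta> * p) * (A + e + E) \<le> 0" using assms by (intro mult_nonpos_nonneg) auto
    with eq_x mult_pos_pos[OF \<open>0 < r\<close> \<open>0 < \<theta> * p\<close>] show False by simp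
  qed
  have "\<theta> * ((1 - p) * (A + e' + C)) = (1 - \<theta> * p) * (A + e + E)"
    using eq_x eq_p by (metis mult.assoc mult.left_commute)
  also have "\<dots> \<le> (1 - \<theta> * p) * (A + e + \<theta> * C)"
    using \<open>0 < 1 - \<theta> * p\<close> assms by (intro mult_left_mono) auto
  finally have "(\<theta> - 1) * (A + e') + \<theta> * p * C * (\<theta> - 1) \<le> (e - e') * (1 - \<theta> * p)"
    by (simp add: algebra_simps)
  moreover have "0 \<le> \<theta> * p * C * (\<theta> - 1)" "(\<theta> - 1) * e' \<le> (\<theta> - 1) * (A + e')"
    using assms by (auto intro: mult_left_mono)
  ultimately have key: "(\<theta> - 1) * e' \<le> (e - e') * (1 - \<theta> * p)" by linarith
  have "0 < (\<theta> - 1) * e'" using assms by simp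
  with key \<open>0 < 1 - \<theta> * p\<close> have "e' < e" by (smt (verit) mult_nonpos_nonneg)
  then have "(e - e') * (1 - \<theta> * p) \<le> e - e'"
    using mult_pos_pos[of "e - e'" "\<theta> * p"] \<open>0 < \<theta> * p\<close> by (simp add: right_diff_distrib)
  with key have "\<theta> * e' \<le> e" by (simp add: algebra_simps)
  then show ?thesis using \<open>0 < e'\<close> by (simp add: pos_le_divide_eq)
qed

locale sis_model =
  fixes B :: "real^'n^'n" and lam delta s :: "real^'n" and q :: "'n \<Rightarrow> real \<Rightarrow> real"
  assumes B_nonneg: "\<And>i j. 0 \<le> B $ i $ j"
    and lam_nonneg: "\<And>i. 0 \<le> lam $ i"
    and delta_pos: "\<And>i. 0 < delta $ i"
    and q_pos: "\<And>i. 0 < q i (s $ i)"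
    and pos_unique: "\<And>e. 0 < e \<Longrightarrow> \<exists>!p. (\<forall>i. 0 < p $ i) \<and> eq_map B (lam + e *\<^sub>R 1) delta q s p = 0"
begin

abbreviation qs :: "'n \<Rightarrow> real" where "qs i \<equiv> q i (s $ i)"
abbreviation "F \<equiv> field B lam delta q s"
abbreviation "p_eps \<equiv> pbar_eps B lam delta q s"

lemma eq_map_eq_0_iff:
  "eq_map B (lam + e *\<^sub>R 1) delta q s p = 0 \<longleftrightarrow>
     (\<forall>i. (1 - p $ i) * (lam $ i + e + (B *v p) $ i) = delta $ i / qs i * p $ i)"
  by (simp add: eq_map_def vec_eq_iff)

lemma p_eps_pos_eq:
  assumes "0 < e"
  shows "0 < p_eps e $ i"
    and "(1 - p_eps e $ i) * (lam $ i + e + (B *v p_eps e) $ i) = delta $ i / qs i * p_eps e $ i"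
proof -
  have "(\<forall>i. 0 < p_eps e $ i) \<and> eq_map B (lam + e *\<^sub>R 1) delta q s (p_eps e) = 0"
    unfolding pbar_eps_def by (rule theI'[OF pos_unique[OF assms]])
  then show "0 < p_eps e $ i"
    and "(1 - p_eps e $ i) * (lam $ i + e + (B *v p_eps e) $ i) = delta $ i / qs i * p_eps e $ i"
    by (auto simp: eq_map_eq_0_iff)
qed

lemma p_eps_less_one:
  assumes "0 < e"
  shows "p_eps e $ i < 1"
proof -
  have "0 \<le> (B *v p_eps e) $ i"
    using p_eps_pos_eq(1)[OF assms] by (intro nonneg_matrix_vector_nonneg B_nonneg less_imp_le)
  moreover have "0 < delta $ i / qs i * p_eps e $ i"
    using delta_pos q_pos p_eps_pos_eq(1)[OF assms] by simp
  ultimately show ?thesis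
    using p_eps_pos_eq(2)[OF assms, of i] lam_nonneg[of i] assms
    by (smt (verit) mult_nonpos_nonneg)
qed

lemma le_scaled_p_eps:
  assumes "0 < e'" "0 \<le> e" and x_nonneg: "\<And>j. 0 \<le> x $ j"
    and x_eq: "\<And>j. (1 - x $ j) * (lam $ j + e + (B *v x) $ j) = delta $ j / qs j * x $ j"
  shows "x $ i \<le> max 1 (e / e') * p_eps e' $ i"
proof -
  let ?p = "p_eps e'"
  have p_pos: "0 < ?p $ j" for j using p_eps_pos_eq(1)[OF \<open>0 < e'\<close>] .
  define \<theta> where "\<theta> = Max (range (\<lambda>j. x $ j / ?p $ j))"
  have "\<theta> \<in> range (\<lambda>j. x $ j / ?p $ j)" unfolding \<theta>_def by (rule Max_in) auto
  then obtain i0 where i0: "\<theta> = x $ i0 / ?p $ i0" by blast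
  have x_le: "x $ j \<le> \<theta> * ?p $ j" for j
    using Max_ge[of "range (\<lambda>j. x $ j / ?p $ j)" "x $ j / ?p $ j"] p_pos[of j]
    by (simp add: \<theta>_def divide_le_eq)
  have "\<theta> \<le> e / e'" if "1 < \<theta>"
  proof (rule max_ratio_le[where A = "lam $ i0" and C = "(B *v ?p) $ i0" and E = "(B *v x) $ i0"
        and r = "delta $ i0 / qs i0" and p = "?p $ i0"])
    show "0 \<le> (B *v ?p) $ i0"
      using p_pos by (intro nonneg_matrix_vector_nonneg B_nonneg) (simp add: less_imp_le)
    show "0 \<le> (B *v x) $ i0" by (intro nonneg_matrix_vector_nonneg B_nonneg x_nonneg)
    show "(B *v x) $ i0 \<le> \<theta> * (B *v ?p) $ i0"
      using nonneg_matrix_vector_mono[OF B_nonneg, of x "\<theta> *\<^sub>R ?p" i0] x_le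
      by (simp add: matrix_vector_mult_scaleR)
    show "(1 - \<theta> * ?p $ i0) * (lam $ i0 + e + (B *v x) $ i0) = delta $ i0 / qs i0 * (\<theta> * ?p $ i0)"
      using x_eq[of i0] i0 p_pos[of i0] by simp
    show "(1 - ?p $ i0) * (lam $ i0 + e' + (B *v ?p) $ i0) = delta $ i0 / qs i0 * ?p $ i0"
      by (rule p_eps_pos_eq(2)[OF \<open>0 < e'\<close>])
  qed (use that assms lam_nonneg delta_pos q_pos p_pos in auto)
  then have "\<theta> \<le> max 1 (e / e')" by linarith
  then show ?thesis
    using x_le[of i] p_pos[of i] by (meson dual_order.trans less_imp_le mult_right_mono)
qed

lemma p_eps_mono:
  assumes "0 < e" "e \<le> e'"
  shows "p_eps e $ i \<le> p_eps e' $ i"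
  using le_scaled_p_eps[of e' e "p_eps e" i] p_eps_pos_eq[OF \<open>0 < e\<close>] assms
  by (simp add: less_imp_le)

lemma p_eps_diff_le:
  assumes "0 < e'" "e' \<le> e"
  shows "p_eps e $ i - p_eps e' $ i \<le> (e - e') / e"
proof -
  have "0 < e" using assms by simp
  have "p_eps e $ i \<le> e / e' * p_eps e' $ i"
    using le_scaled_p_eps[of e' e "p_eps e" i] p_eps_pos_eq[OF \<open>0 < e\<close>] assms
    by (simp add: less_imp_le)
  then have "e' / e * p_eps e $ i \<le> p_eps e' $ i"
    using assms by (simp add: field_simps)
  then have "p_eps e $ i - p_eps e' $ i \<le> (1 - e' / e) * p_eps e $ i"
    by (simp add: algebra_simps)
  also have "\<dots> \<le> 1 - e' / e"
    using p_eps_less_one[OF \<open>0 < e\<close>, of i] assms by (intro mult_left_le) auto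
  also have "\<dots> = (e - e') / e" using \<open>0 < e\<close> by (simp add: field_simps)
  finally show ?thesis .
qed

definition p_lim :: "real^'n" where
  "p_lim = (\<chi> i. Inf ((\<lambda>e. p_eps e $ i) ` {0<..}))"

lemma p_eps_tendsto_p_lim: "(p_eps \<longlongrightarrow> p_lim) (at_right 0)"
proof (rule vec_tendstoI)
  fix i
  have "((\<lambda>e. p_eps e $ i) \<longlongrightarrow> Inf ((\<lambda>e. p_eps e $ i) ` ({0<..} \<inter> UNIV)))
          (at 0 within ({0<..} \<inter> UNIV))"
    by (rule Lim_right_bound[where K = 0])
      (auto intro: p_eps_mono less_imp_le[OF p_eps_pos_eq(1)])
  then show "((\<lambda>e. p_eps e $ i) \<longlongrightarrow> p_lim $ i) (at_right 0)" by (simp add: p_lim_def)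
qed

lemma p_lim_le_p_eps:
  assumes "0 < e"
  shows "p_lim $ i \<le> p_eps e $ i"
  unfolding p_lim_def using assms
  by (auto intro!: cInf_lower bdd_belowI[of _ 0] less_imp_le[OF p_eps_pos_eq(1)])

lemma p_lim_nonneg: "0 \<le> p_lim $ i"
  unfolding p_lim_def
  by (auto intro!: cINF_greatest less_imp_le[OF p_eps_pos_eq(1)])

lemma p_lim_less_one: "p_lim $ i < 1"
  using p_lim_le_p_eps[of 1 i] p_eps_less_one[of 1 i] by simp

lemma p_lim_eq: "(1 - p_lim $ i) * (lam $ i + (B *v p_lim) $ i) = delta $ i / qs i * p_lim $ i"
proof -
  have lim: "((\<lambda>e. p_eps e $ i) \<longlongrightarrow> p_lim $ i) (at_right 0)"
    "((\<lambda>e. (B *v p_eps e) $ i) \<longlongrightarrow> (B *v p_lim) $ i) (at_right 0)"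
    using p_eps_tendsto_p_lim
    by (auto intro!: tendsto_vec_nth bounded_linear.tendsto[OF matrix_vector_mul_bounded_linear])
  have "((\<lambda>e. (1 - p_eps e $ i) * (lam $ i + e + (B *v p_eps e) $ i))
          \<longlongrightarrow> (1 - p_lim $ i) * (lam $ i + 0 + (B *v p_lim) $ i)) (at_right 0)"
    by (intro tendsto_mult tendsto_diff tendsto_add tendsto_const tendsto_ident_at lim)
  moreover have "\<forall>\<^sub>F e in at_right 0.
      (1 - p_eps e $ i) * (lam $ i + e + (B *v p_eps e) $ i) = delta $ i / qs i * p_eps e $ i"
    using p_eps_pos_eq(2) by (auto simp: eventually_at_right_field intro!: exI[of _ 1])
  ultimately have "((\<lambda>e. delta $ i / qs i * p_eps e $ i)
          \<longlongrightarrow> (1 - p_lim $ i) * (lam $ i + 0 + (B *v p_lim) $ i)) (at_right 0)"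
    by (rule Lim_transform_eventually)
  moreover have "((\<lambda>e. delta $ i / qs i * p_eps e $ i) \<longlongrightarrow> delta $ i / qs i * p_lim $ i) (at_right 0)"
    by (intro tendsto_mult tendsto_const lim)
  ultimately have
    "(1 - p_lim $ i) * (lam $ i + 0 + (B *v p_lim) $ i) = delta $ i / qs i * p_lim $ i"
    by (rule tendsto_unique[OF trivial_limit_at_right_real])
  then show ?thesis by simp
qed

lemma field_nth: "F p $ i = (1 - p $ i) * qs i * (lam $ i + (B *v p) $ i) - delta $ i * p $ i"
  by (simp add: field_def)

text \<open>The system is cooperative: F y $ i is increasing in y $ j for j \<noteq> i.\<close>
lemma field_diff:
  "F y $ i - F z $ i = (1 - y $ i) * qs i * (B *v (y - z)) $ i
     - (y $ i - z $ i) * (qs i * (lam $ i + (B *v z) $ i) + delta $ i)"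
  by (simp add: field_nth matrix_vector_mult_diff_distrib algebra_simps)

lemma field_le_of_le:
  assumes "\<And>j. y $ j \<le> z $ j" "y $ i \<le> 1"
  shows "F y $ i \<le> F z $ i + (z $ i - y $ i) * (qs i * (lam $ i + (B *v z) $ i) + delta $ i)"
proof -
  have "(B *v (y - z)) $ i \<le> (B *v 0) $ i"
    using assms by (intro nonneg_matrix_vector_mono B_nonneg) simp
  then have "(1 - y $ i) * qs i * (B *v (y - z)) $ i \<le> 0"
    using assms q_pos[of i] by (simp add: mult_nonneg_nonpos)
  then show ?thesis using field_diff[of y i z] by (simp add: algebra_simps)
qed

lemma field_ge_of_ge:
  assumes "\<And>j. z $ j \<le> y $ j" "y $ i \<le> 1"
  shows "F z $ i - (y $ i - z $ i) * (qs i * (lam $ i + (B *v z) $ i) + delta $ i) \<le> F y $ i"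
proof -
  have "(B *v 0) $ i \<le> (B *v (y - z)) $ i"
    using assms by (intro nonneg_matrix_vector_mono B_nonneg) simp
  then have "0 \<le> (1 - y $ i) * qs i * (B *v (y - z)) $ i"
    using assms q_pos[of i] by simp
  then show ?thesis using field_diff[of y i z] by (simp add: algebra_simps)
qed

lemma field_p_eps:
  assumes "0 < e"
  shows "F (p_eps e) $ i = - (qs i * (1 - p_eps e $ i) * e)"
  using p_eps_pos_eq(2)[OF assms, of i] q_pos[of i]
  by (simp add: field_nth field_simps)

lemma field_p_eps_neg:
  assumes "0 < e"
  shows "F (p_eps e) $ i < 0"
  using field_p_eps[OF assms] q_pos[of i] p_eps_less_one[OF assms, of i] assms by simp

lemma field_scaled_p_lim:
  "F (\<tau> *\<^sub>R p_lim) $ i = qs i * (1 - \<tau>) * (lam $ i + \<tau> * p_lim $ i * (B *v p_lim) $ i)"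
proof -
  have "delta $ i * p_lim $ i = qs i * ((1 - p_lim $ i) * (lam $ i + (B *v p_lim) $ i))"
    using p_lim_eq[of i] q_pos[of i] by (simp add: field_simps)
  then have "F (\<tau> *\<^sub>R p_lim) $ i = (1 - \<tau> * p_lim $ i) * qs i * (lam $ i + \<tau> * (B *v p_lim) $ i)
      - \<tau> * (qs i * ((1 - p_lim $ i) * (lam $ i + (B *v p_lim) $ i)))"
    by (simp add: field_nth matrix_vector_mult_scaleR)
  then show ?thesis by (simp add: algebra_simps)
qed

lemma scaled_p_lim_force_pos:
  assumes "0 < \<tau>" "0 < p_lim $ i"
  shows "0 < lam $ i + \<tau> * p_lim $ i * (B *v p_lim) $ i"
proof -
  have B_p: "0 \<le> (B *v p_lim) $ i"
    by (intro nonneg_matrix_vector_nonneg B_nonneg p_lim_nonneg)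
  have "0 < (1 - p_lim $ i) * (lam $ i + (B *v p_lim) $ i)"
    using p_lim_eq[of i] delta_pos[of i] q_pos[of i] assms by simp
  then have "0 < lam $ i + (B *v p_lim) $ i"
    using p_lim_less_one[of i] by (simp add: zero_less_mult_iff)
  then show ?thesis
    using lam_nonneg[of i] B_p assms by (cases "lam $ i = 0") (auto intro: add_pos_nonneg)
qed

lemma field_scaled_p_lim_pos:
  assumes "0 < \<tau>" "\<tau> < 1" "0 < p_lim $ i"
  shows "0 < F (\<tau> *\<^sub>R p_lim) $ i"
  using field_scaled_p_lim scaled_p_lim_force_pos assms q_pos[of i] by simp

lemma p_lim_less_p_eps:
  assumes "0 < e"
  shows "p_lim $ i < p_eps e $ i"
proof -
  have "F (p_eps e) $ i < F p_lim $ i"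
    using field_p_eps_neg[OF assms] field_scaled_p_lim[of 1 i] by simp
  moreover have "F p_lim $ i
      - (p_eps e $ i - p_lim $ i) * (qs i * (lam $ i + (B *v p_lim) $ i) + delta $ i)
      \<le> F (p_eps e) $ i"
    using p_lim_le_p_eps[OF assms] less_imp_le[OF p_eps_less_one[OF assms]]
    by (intro field_ge_of_ge)
  ultimately have "p_lim $ i \<noteq> p_eps e $ i" by auto
  then show ?thesis using p_lim_le_p_eps[OF assms, of i] by simp
qed

section \<open>Trajectories\<close>

lemma solution_stays_below:
  assumes sol: "is_solution F x" and "0 \<le> t0"
    and z_le: "\<And>j. z $ j \<le> 1" and F_neg: "\<And>j. F z $ j < 0"
    and init: "\<And>j. x t0 $ j \<le> z $ j" and "t0 \<le> t"
  shows "x t $ i \<le> z $ i"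
proof -
  have deriv: "((\<lambda>u. x u $ j - z $ j) has_real_derivative F (x u) $ j) (at u within {t0..})"
    if "t0 \<le> u" for j u
    using is_solution_nth_deriv[OF sol \<open>0 \<le> t0\<close> that] by (auto intro!: derivative_eq_intros)
  have exit: "F (x u) $ j < 0" if "\<forall>k. x u $ k - z $ k \<le> 0" "x u $ j - z $ j = 0" for j u
    using field_le_of_le[of "x u" z j] that z_le[of j] F_neg[of j] by auto
  have "x t $ i - z $ i \<le> 0"
    by (rule nonpos_forward_invariant[where K = UNIV and \<phi> = "\<lambda>j u. x u $ j - z $ j"
          and \<phi>' = "\<lambda>j u. F (x u) $ j" and T = t]) (use deriv exit init \<open>t0 \<le> t\<close> in auto)
  then show ?thesis by simp
qed

lemma solution_stays_above:
  assumes sol: "is_solution F x" and "0 \<le> t0" and x_nonneg: "\<And>u j. t0 \<le> u \<Longrightarrow> 0 \<le> x u $ j"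
    and z_le: "\<And>j. z $ j \<le> 1" and F_pos: "\<And>j. 0 < z $ j \<Longrightarrow> 0 < F z $ j"
    and init: "\<And>j. z $ j \<le> x t0 $ j" and "t0 \<le> t"
  shows "z $ i \<le> x t $ i"
proof (cases "0 < z $ i")
  case True
  have deriv: "((\<lambda>u. z $ j - x u $ j) has_real_derivative - F (x u) $ j) (at u within {t0..})"
    if "t0 \<le> u" for j u
    using is_solution_nth_deriv[OF sol \<open>0 \<le> t0\<close> that] by (auto intro!: derivative_eq_intros)
  have exit: "- F (x u) $ j < 0"
    if "0 < z $ j" "t0 \<le> u" "\<forall>k\<in>{k. 0 < z $ k}. z $ k - x u $ k \<le> 0" "z $ j - x u $ j = 0" for j u
  proof -
    have "z $ k \<le> x u $ k" for k
      using that(3) x_nonneg[OF \<open>t0 \<le> u\<close>, of k] by (cases "0 < z $ k") auto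
    then have "F z $ j \<le> F (x u) $ j"
      using field_ge_of_ge[of z "x u" j] that z_le[of j] by auto
    then show ?thesis using F_pos[OF \<open>0 < z $ j\<close>] by simp
  qed
  have "z $ i - x t $ i \<le> 0"
    by (rule nonpos_forward_invariant[where K = "{j. 0 < z $ j}" and \<phi> = "\<lambda>j u. z $ j - x u $ j"
          and \<phi>' = "\<lambda>j u. - F (x u) $ j" and T = t])
      (use deriv exit init True \<open>t0 \<le> t\<close> in auto)
  then show ?thesis by simp
next
  case False
  then show ?thesis using x_nonneg[OF \<open>t0 \<le> t\<close>, of i] by simp
qed

lemma field_at_negative_face:
  assumes "0 < w" "w \<le> 1" and y_ge: "\<And>j. - w \<le> y $ j" and y_i: "y $ i = - w"
    and K: "2 * (qs i * (B *v 1) $ i) + 1 \<le> K"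
  shows "- K * w < F y $ i"
proof -
  have "0 \<le> qs i * (B *v 1) $ i"
    using q_pos[of i] nonneg_matrix_vector_nonneg[OF B_nonneg, of 1 i] by simp
  then have "(1 + w) * (w * (qs i * (B *v 1) $ i)) \<le> 2 * (w * (qs i * (B *v 1) $ i))"
    using assms by (intro mult_right_mono) auto
  moreover have "(2 * (qs i * (B *v 1) $ i) + 1) * w \<le> K * w"
    using K \<open>0 < w\<close> by (intro mult_right_mono) auto
  moreover have "(B *v ((- w) *\<^sub>R 1)) $ i \<le> (B *v y) $ i"
    by (intro nonneg_matrix_vector_mono B_nonneg) (simp add: y_ge)
  then have "- w * (B *v 1) $ i \<le> lam $ i + (B *v y) $ i"
    using lam_nonneg[of i] unfolding matrix_vector_mult_scaleR by simp
  then have "(1 + w) * qs i * (- w * (B *v 1) $ i) \<le> (1 + w) * qs i * (lam $ i + (B *v y) $ i)"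
    using assms q_pos[of i] by (intro mult_left_mono) auto
  then have "- ((1 + w) * (w * (qs i * (B *v 1) $ i))) \<le> (1 + w) * qs i * (lam $ i + (B *v y) $ i)"
    by (simp add: algebra_simps)
  moreover have "F y $ i = (1 + w) * qs i * (lam $ i + (B *v y) $ i) + delta $ i * w"
    by (simp add: field_nth y_i)
  moreover have "0 < delta $ i * w" using delta_pos[of i] assms by simp
  moreover have "(2 * (qs i * (B *v 1) $ i) + 1) * w = 2 * (w * (qs i * (B *v 1) $ i)) + w"
    by (simp add: algebra_simps)
  ultimately show ?thesis using \<open>0 < w\<close> by (simp only: mult_minus_left)
qed

text \<open>The slack \<eta> exp (K t) grows faster than the field can push a coordinate below zero
  at a first exit, as long as the slack is at most 1.\<close>
lemma solution_above_neg_slack: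
  assumes sol: "is_solution F x" and init: "\<And>j. 0 \<le> x 0 $ j"
    and K: "\<And>j. 2 * (qs j * (B *v 1) $ j) + 1 \<le> K"
    and "0 < \<eta>" "\<eta> \<le> exp (- K * t)" "0 \<le> t"
  shows "- x t $ i \<le> \<eta> * exp (K * t)"
proof -
  have "0 \<le> qs i * (B *v 1) $ i"
    using q_pos[of i] nonneg_matrix_vector_nonneg[OF B_nonneg, of 1 i] by simp
  then have "0 < K" using K[of i] by linarith
  have deriv: "((\<lambda>u. - x u $ j - \<eta> * exp (K * u)) has_real_derivative
      - F (x u) $ j - \<eta> * (K * exp (K * u))) (at u within {0..})" if "0 \<le> u" for j u
    using is_solution_nth_deriv[OF sol order_refl that] by (auto intro!: derivative_eq_intros)
  have exit: "- F (x u) $ j - \<eta> * (K * exp (K * u)) < 0"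
    if "u < t" "\<forall>k. - x u $ k - \<eta> * exp (K * u) \<le> 0" "- x u $ j - \<eta> * exp (K * u) = 0" for j u
  proof -
    have "\<eta> * exp (K * u) \<le> exp (- K * t) * exp (K * u)"
      using \<open>\<eta> \<le> exp (- K * t)\<close> by simp
    also have "\<dots> \<le> 1"
      using \<open>u < t\<close> \<open>0 < K\<close> by (simp add: mult_exp_exp algebra_simps)
    finally have "\<eta> * exp (K * u) \<le> 1" .
    moreover have "- (\<eta> * exp (K * u)) \<le> x u $ k" for k
      using that(2) by (simp add: add.commute minus_le_iff)
    ultimately have "- K * (\<eta> * exp (K * u)) < F (x u) $ j"
      using that \<open>0 < \<eta>\<close> K[of j] by (intro field_at_negative_face) auto
    then show ?thesis by (simp add: algebra_simps)
  qed
  have init_slack: "- x 0 $ j \<le> \<eta>" for j using init[of j] \<open>0 < \<eta>\<close> by linarith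
  have "- x t $ i - \<eta> * exp (K * t) \<le> 0"
    by (rule nonpos_forward_invariant[of UNIV 0 "\<lambda>j u. - x u $ j - \<eta> * exp (K * u)"
          "\<lambda>j u. - F (x u) $ j - \<eta> * (K * exp (K * u))" t])
      (use deriv exit init_slack \<open>0 \<le> t\<close> in auto)
  then show ?thesis by simp
qed

lemma solution_nonneg:
  assumes sol: "is_solution F x" and init: "\<And>j. 0 \<le> x 0 $ j" and "0 \<le> t"
  shows "0 \<le> x t $ i"
proof (rule field_le_epsilon[of "- x t $ i" 0, simplified])
  define K where "K = Max (range (\<lambda>j. 2 * (qs j * (B *v 1) $ j) + 1))"
  have K: "2 * (qs j * (B *v 1) $ j) + 1 \<le> K" for j unfolding K_def by (rule Max_ge) auto
  fix e :: real assume "0 < e"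
  then have "- x t $ i \<le> min 1 e * exp (- K * t) * exp (K * t)"
    using assms K by (intro solution_above_neg_slack) auto
  also have "\<dots> = min 1 e" by (simp add: mult.assoc flip: exp_add)
  also have "\<dots> \<le> e" by simp
  finally show "- x t $ i \<le> e" .
qed

lemma solution_in_unit_cube:
  assumes sol: "is_solution F x" and "x 0 \<in> unit_cube" and "0 \<le> t"
  shows "x t \<in> unit_cube"
proof -
  have "F 1 $ j < 0" for j using delta_pos[of j] by (simp add: field_nth)
  then have "x t $ i \<le> 1" for i
    using solution_stays_below[OF sol order_refl, of 1] assms by (auto simp: unit_cube_def)
  moreover have "0 \<le> x t $ i" for i
    using solution_nonneg[OF sol] assms by (auto simp: unit_cube_def)
  ultimately show ?thesis by (simp add: unit_cube_def)
qed

lemma solution_stays_below_p_eps: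
  assumes sol: "is_solution F x" and "0 < a" and init: "\<And>j. x 0 $ j \<le> p_eps a $ j" and "0 \<le> t"
  shows "x t $ i \<le> p_eps a $ i"
  using solution_stays_below[OF sol order_refl _ field_p_eps_neg[OF \<open>0 < a\<close>] init \<open>0 \<le> t\<close>]
    less_imp_le[OF p_eps_less_one[OF \<open>0 < a\<close>]] .

lemma solution_stays_above_scaled_p_lim:
  assumes sol: "is_solution F x" and "0 < \<tau>" "\<tau> < 1"
    and init: "\<And>j. \<tau> * p_lim $ j \<le> x 0 $ j" and "0 \<le> t"
  shows "\<tau> * p_lim $ i \<le> x t $ i"
proof -
  have "0 \<le> x 0 $ j" for j
    using init[of j] mult_nonneg_nonneg[of \<tau> "p_lim $ j"] \<open>0 < \<tau>\<close> p_lim_nonneg[of j] by linarith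
  then have x_nonneg: "0 \<le> x u $ j" if "0 \<le> u" for u j using solution_nonneg[OF sol _ that] by blast
  have "(\<tau> *\<^sub>R p_lim) $ i \<le> x t $ i"
  proof (rule solution_stays_above[OF sol order_refl x_nonneg _ _ _ \<open>0 \<le> t\<close>])
    show "(\<tau> *\<^sub>R p_lim) $ k \<le> 1" for k
      using assms p_lim_nonneg[of k] p_lim_less_one[of k] by (simp add: mult_le_one)
    show "0 < F (\<tau> *\<^sub>R p_lim) $ k" if "0 < (\<tau> *\<^sub>R p_lim) $ k" for k
      using that assms by (intro field_scaled_p_lim_pos) (auto simp: zero_less_mult_iff)
    show "(\<tau> *\<^sub>R p_lim) $ k \<le> x 0 $ k" for k using init[of k] by simp
  qed
  then show ?thesis by simp
qed

lemma solution_descends_below: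
  assumes sol: "is_solution F x" and "0 \<le> t0"
    and below: "\<And>u j. t0 \<le> u \<Longrightarrow> x u $ j \<le> z $ j" and "z $ i \<le> 1"
    and "0 < c" "F z $ i \<le> - c"
    and "0 < L" "qs i * (lam $ i + (B *v z) $ i) + delta $ i \<le> L"
    and "t0 + 2 / L \<le> t"
  shows "x t $ i \<le> z $ i - c / (2 * L)"
proof (rule drift_below[where f = "\<lambda>u. x u $ i" and f' = "\<lambda>u. F (x u) $ i"
      and U = "z $ i" and \<rho> = "c / (2 * L)" and c = "c / 2"])
  show "F (x u) $ i \<le> - (c / 2)" if "t0 \<le> u" "z $ i - c / (2 * L) \<le> x u $ i" for u
  proof -
    have "F (x u) $ i \<le> F z $ i + (z $ i - x u $ i) * (qs i * (lam $ i + (B *v z) $ i) + delta $ i)"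
      using below[OF \<open>t0 \<le> u\<close>] \<open>z $ i \<le> 1\<close> order_trans by (intro field_le_of_le) blast+
    also have "\<dots> \<le> - c + (z $ i - x u $ i) * L"
      using assms below[OF \<open>t0 \<le> u\<close>, of i] by (intro add_mono mult_left_mono) auto
    also have "\<dots> \<le> - c + c / (2 * L) * L"
      using that \<open>0 < L\<close> by (intro add_left_mono mult_right_mono) auto
    finally show ?thesis using \<open>0 < L\<close> by simp
  qed
qed (use assms is_solution_nth_deriv in \<open>auto simp: field_simps\<close>)

lemma solution_ascends_above:
  assumes sol: "is_solution F x" and "0 \<le> t0"
    and above: "\<And>u j. t0 \<le> u \<Longrightarrow> z $ j \<le> x u $ j" and le_one: "\<And>u. t0 \<le> u \<Longrightarrow> x u $ i \<le> 1"
    and "0 < c" "c \<le> F z $ i"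
    and "0 < L" "qs i * (lam $ i + (B *v z) $ i) + delta $ i \<le> L"
    and "t0 + 2 / L \<le> t"
  shows "z $ i + c / (2 * L) \<le> x t $ i"
proof -
  have "- x t $ i \<le> - z $ i - c / (2 * L)"
  proof (rule drift_below[where f = "\<lambda>u. - x u $ i" and f' = "\<lambda>u. - F (x u) $ i"
        and U = "- z $ i" and \<rho> = "c / (2 * L)" and c = "c / 2"])
    show "- F (x u) $ i \<le> - (c / 2)" if "t0 \<le> u" "- z $ i - c / (2 * L) \<le> - x u $ i" for u
    proof -
      have "(x u $ i - z $ i) * (qs i * (lam $ i + (B *v z) $ i) + delta $ i)
          \<le> (x u $ i - z $ i) * L"
        using assms above[OF \<open>t0 \<le> u\<close>, of i] by (intro mult_left_mono) auto
      also have "\<dots> \<le> c / (2 * L) * L"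
        using that \<open>0 < L\<close> by (intro mult_right_mono) auto
      finally have "(x u $ i - z $ i) * (qs i * (lam $ i + (B *v z) $ i) + delta $ i) \<le> c / 2"
        using \<open>0 < L\<close> by simp
      moreover have "F z $ i - (x u $ i - z $ i) * (qs i * (lam $ i + (B *v z) $ i) + delta $ i)
          \<le> F (x u) $ i"
        using above[OF \<open>t0 \<le> u\<close>] le_one[OF \<open>t0 \<le> u\<close>] by (rule field_ge_of_ge)
      ultimately show ?thesis using \<open>c \<le> F z $ i\<close> by linarith
    qed
  qed (use assms is_solution_nth_deriv in \<open>auto simp: field_simps intro!: derivative_eq_intros\<close>)
  then show ?thesis by simp
qed

text \<open>The step m a^2 / (2 L) in the rate is small enough that, by p_eps_diff_le, it moves
  p_eps by at most the margin m a / (2 L) that the trajectory gains below p_eps \<epsilon>.\<close>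
lemma solution_descends_p_eps:
  assumes sol: "is_solution F x" and "0 \<le> T" and "0 < a" "a \<le> \<epsilon>" "\<epsilon> \<le> e0"
    and below: "\<And>t j. T \<le> t \<Longrightarrow> x t $ j \<le> p_eps \<epsilon> $ j"
    and m: "0 < m" "\<And>j. m \<le> qs j * (1 - p_eps e0 $ j)"
    and L: "0 < L" "\<And>j. qs j * (lam $ j + (B *v p_eps e0) $ j) + delta $ j \<le> L"
    and "T + 2 / L \<le> t"
  shows "x t $ i \<le> p_eps (max a (\<epsilon> - m * a * a / (2 * L))) $ i"
proof -
  have "0 < \<epsilon>" using assms by simp
  have "x t $ i \<le> p_eps \<epsilon> $ i - m * a / (2 * L)"
  proof (rule solution_descends_below[OF sol \<open>0 \<le> T\<close> below])
    have "qs i * (1 - p_eps e0 $ i) \<le> qs i * (1 - p_eps \<epsilon> $ i)"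
      using p_eps_mono[OF \<open>0 < \<epsilon>\<close> \<open>\<epsilon> \<le> e0\<close>, of i] q_pos[of i] by simp
    then have "m \<le> qs i * (1 - p_eps \<epsilon> $ i)" using m(2)[of i] by linarith
    then have "m * a \<le> qs i * (1 - p_eps \<epsilon> $ i) * \<epsilon>"
      using \<open>0 < m\<close> \<open>0 < a\<close> \<open>a \<le> \<epsilon>\<close> by (intro mult_mono) auto
    then show "F (p_eps \<epsilon>) $ i \<le> - (m * a)" by (simp add: field_p_eps[OF \<open>0 < \<epsilon>\<close>])
    have "(B *v p_eps \<epsilon>) $ i \<le> (B *v p_eps e0) $ i"
      by (intro nonneg_matrix_vector_mono B_nonneg p_eps_mono \<open>0 < \<epsilon>\<close> \<open>\<epsilon> \<le> e0\<close>)
    then show "qs i * (lam $ i + (B *v p_eps \<epsilon>) $ i) + delta $ i \<le> L"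
      using L(2)[of i] q_pos[of i] by (smt (verit) mult_left_mono)
  qed (use assms less_imp_le[OF p_eps_less_one[OF \<open>0 < \<epsilon>\<close>]] in auto)
  also have "\<dots> \<le> p_eps (max a (\<epsilon> - m * a * a / (2 * L))) $ i"
  proof -
    let ?\<epsilon>' = "max a (\<epsilon> - m * a * a / (2 * L))"
    have "p_eps \<epsilon> $ i - p_eps ?\<epsilon>' $ i \<le> (\<epsilon> - ?\<epsilon>') / \<epsilon>"
      using assms by (intro p_eps_diff_le) auto
    also have "\<dots> \<le> (m * a * a / (2 * L)) / a"
      using assms by (intro frac_le) auto
    finally show ?thesis using \<open>0 < a\<close> by simp
  qed
  finally show ?thesis .
qed

lemma eventually_below_p_eps:
  assumes sol: "is_solution F x" and "0 < e0" and init: "\<And>j. x 0 $ j \<le> p_eps e0 $ j"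
    and "0 < a" "a \<le> e0"
  shows "\<forall>\<^sub>F t in at_top. \<forall>i. x t $ i \<le> p_eps a $ i"
proof -
  obtain m where m: "0 < m" "\<And>j. m \<le> qs j * (1 - p_eps e0 $ j)"
    using finite_pos_lower_bound[of UNIV "\<lambda>j. qs j * (1 - p_eps e0 $ j)"]
      q_pos p_eps_less_one[OF \<open>0 < e0\<close>] by auto
  define L where "L = Max (range (\<lambda>j. qs j * (lam $ j + (B *v p_eps e0) $ j) + delta $ j))"
  have L_ge: "qs j * (lam $ j + (B *v p_eps e0) $ j) + delta $ j \<le> L" for j
    unfolding L_def by (rule Max_ge) auto
  have "0 \<le> (B *v p_eps e0) $ i"
    using p_eps_pos_eq(1)[OF \<open>0 < e0\<close>]
    by (intro nonneg_matrix_vector_nonneg B_nonneg) (simp add: less_imp_le)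
  then have "0 < L"
    using L_ge[of i] q_pos[of i] lam_nonneg[of i] delta_pos[of i]
    by (smt (verit) mult_nonneg_nonneg)
  define P where "P u T \<longleftrightarrow> 0 \<le> T \<and> (\<forall>t\<ge>T. \<forall>j. x t $ j \<le> p_eps (- u) $ j)" for u T
  have "\<exists>T. P (- a) T"
  proof (rule uniform_steps_reach[where a = "- e0" and t = 0 and d = "m * a * a / (2 * L)"])
    show "P (- e0) 0"
      using solution_stays_below_p_eps[OF sol \<open>0 < e0\<close> init] by (simp add: P_def)
    show "\<exists>T'. P (min (- a) (u + m * a * a / (2 * L))) T'" if "- e0 \<le> u" "u < - a" "P u T" for u T
    proof (intro exI[of _ "T + 2 / L"])
      have "min (- a) (u + m * a * a / (2 * L)) = - max a (- u - m * a * a / (2 * L))" by simp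
      then show "P (min (- a) (u + m * a * a / (2 * L))) (T + 2 / L)"
        using that solution_descends_p_eps[OF sol _ \<open>0 < a\<close> _ _ _ m \<open>0 < L\<close> L_ge, of T "- u"]
          \<open>0 < L\<close> by (auto simp: P_def)
    qed
  qed (use assms m \<open>0 < L\<close> in auto)
  then show ?thesis by (auto simp: P_def eventually_at_top_linorder)
qed

lemma solution_ascends_scaled_p_lim:
  assumes sol: "is_solution F x" and "0 \<le> T" and "0 < \<sigma>" "\<sigma> \<le> \<tau>" "\<tau> \<le> \<upsilon>" "\<upsilon> < 1"
    and cube: "\<And>t. T \<le> t \<Longrightarrow> x t \<in> unit_cube"
    and above: "\<And>t j. T \<le> t \<Longrightarrow> \<tau> * p_lim $ j \<le> x t $ j"
    and c: "0 < c" "\<And>j. 0 < p_lim $ j \<Longrightarrow>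
      c \<le> qs j * (1 - \<upsilon>) * (lam $ j + \<sigma> * p_lim $ j * (B *v p_lim) $ j)"
    and L: "0 < L" "\<And>j. qs j * (lam $ j + (B *v p_lim) $ j) + delta $ j \<le> L"
    and "T + 2 / L \<le> t"
  shows "(\<tau> + c / (2 * L)) * p_lim $ i \<le> x t $ i"
proof (cases "0 < p_lim $ i")
  case True
  have C: "0 \<le> (B *v p_lim) $ i" by (intro nonneg_matrix_vector_nonneg B_nonneg p_lim_nonneg)
  have "(\<tau> *\<^sub>R p_lim) $ i + c / (2 * L) \<le> x t $ i"
  proof (rule solution_ascends_above[OF sol \<open>0 \<le> T\<close>, where z = "\<tau> *\<^sub>R p_lim"])
    have "c \<le> qs i * (1 - \<upsilon>) * (lam $ i + \<sigma> * p_lim $ i * (B *v p_lim) $ i)"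
      using c(2)[OF True] .
    also have "\<dots> \<le> qs i * (1 - \<tau>) * (lam $ i + \<tau> * p_lim $ i * (B *v p_lim) $ i)"
      using assms q_pos[of i] C p_lim_nonneg[of i] lam_nonneg[of i]
      by (intro mult_mono add_left_mono mult_right_mono) auto
    finally show "c \<le> F (\<tau> *\<^sub>R p_lim) $ i" by (simp add: field_scaled_p_lim)
    have "\<tau> * (B *v p_lim) $ i \<le> (B *v p_lim) $ i"
      using C assms by (simp add: mult_left_le_one_le)
    then have "qs i * (lam $ i + \<tau> * (B *v p_lim) $ i) + delta $ i \<le> L"
      using L(2)[of i] q_pos[of i] by (smt (verit) mult_left_mono)
    then show "qs i * (lam $ i + (B *v (\<tau> *\<^sub>R p_lim)) $ i) + delta $ i \<le> L"
      by (simp add: matrix_vector_mult_scaleR)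
  qed (use assms cube in \<open>auto simp: unit_cube_def\<close>)
  moreover have "c / (2 * L) * p_lim $ i \<le> c / (2 * L)"
    using p_lim_less_one[of i] True assms by (intro mult_left_le) auto
  ultimately show ?thesis by (simp add: algebra_simps)
next
  case False
  have "T \<le> t" using \<open>0 < L\<close> \<open>T + 2 / L \<le> t\<close> by (smt (verit) divide_pos_pos)
  then show ?thesis using cube False p_lim_nonneg[of i] by (auto simp: unit_cube_def)
qed

lemma eventually_above_scaled_p_lim:
  assumes sol: "is_solution F x" and "x 0 \<in> unit_cube"
    and init: "\<And>j. \<sigma> * p_lim $ j \<le> x 0 $ j" and "0 < \<sigma>" "\<sigma> \<le> \<tau>" "\<tau> < 1"
  shows "\<forall>\<^sub>F t in at_top. \<forall>i. \<tau> * p_lim $ i \<le> x t $ i"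
proof -
  have cube: "x t \<in> unit_cube" if "0 \<le> t" for t using solution_in_unit_cube assms that by blast
  obtain c where c: "0 < c" "\<And>j. 0 < p_lim $ j \<Longrightarrow>
      c \<le> qs j * (1 - \<tau>) * (lam $ j + \<sigma> * p_lim $ j * (B *v p_lim) $ j)"
    using finite_pos_lower_bound[of "{j. 0 < p_lim $ j}"
        "\<lambda>j. qs j * (1 - \<tau>) * (lam $ j + \<sigma> * p_lim $ j * (B *v p_lim) $ j)"]
      scaled_p_lim_force_pos[of \<sigma>] q_pos assms by auto
  define L where "L = Max (range (\<lambda>j. qs j * (lam $ j + (B *v p_lim) $ j) + delta $ j))"
  have L_ge: "qs j * (lam $ j + (B *v p_lim) $ j) + delta $ j \<le> L" for j
    unfolding L_def by (rule Max_ge) auto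
  have "0 \<le> (B *v p_lim) $ i" by (intro nonneg_matrix_vector_nonneg B_nonneg p_lim_nonneg)
  then have "0 < L"
    using L_ge[of i] q_pos[of i] lam_nonneg[of i] delta_pos[of i]
    by (smt (verit) mult_nonneg_nonneg)
  define P where "P r T \<longleftrightarrow> 0 \<le> T \<and> (\<forall>t\<ge>T. \<forall>j. r * p_lim $ j \<le> x t $ j)" for r T
  have "\<exists>T. P \<tau> T"
  proof (rule uniform_steps_reach[where a = \<sigma> and t = 0 and d = "c / (2 * L)"])
    show "P \<sigma> 0"
      using solution_stays_above_scaled_p_lim[OF sol \<open>0 < \<sigma>\<close> _ init] assms
      by (simp add: P_def)
    show "\<exists>T'. P (min \<tau> (r + c / (2 * L))) T'" if "\<sigma> \<le> r" "r < \<tau>" "P r T" for r T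
    proof (intro exI[of _ "T + 2 / L"])
      have "min \<tau> (r + c / (2 * L)) * p_lim $ j \<le> (r + c / (2 * L)) * p_lim $ j" for j
        using p_lim_nonneg[of j] by (intro mult_right_mono) auto
      then show "P (min \<tau> (r + c / (2 * L))) (T + 2 / L)"
        using that solution_ascends_scaled_p_lim[OF sol _ \<open>0 < \<sigma>\<close> _ _ \<open>\<tau> < 1\<close> _ _ c \<open>0 < L\<close> L_ge,
            of T r] cube \<open>0 < L\<close> unfolding P_def
        by (smt (verit) divide_pos_pos)
    qed
  qed (use assms c \<open>0 < L\<close> in auto)
  then show ?thesis by (auto simp: P_def eventually_at_top_linorder)
qed

section \<open>Stability of the limit equilibrium\<close>

definition trap :: "real \<Rightarrow> real \<Rightarrow> (real^'n) set" where
  "trap a \<tau> = {y. \<forall>i. \<tau> * p_lim $ i \<le> y $ i \<and> y $ i \<le> p_eps a $ i}"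

lemma trap_forward_invariant:
  assumes sol: "is_solution F x" and "x 0 \<in> trap a \<tau>" and "0 < a" "0 < \<tau>" "\<tau> < 1" "0 \<le> t"
  shows "x t \<in> trap a \<tau>"
  using solution_stays_above_scaled_p_lim[OF sol \<open>0 < \<tau>\<close> \<open>\<tau> < 1\<close> _ \<open>0 \<le> t\<close>]
    solution_stays_below_p_eps[OF sol \<open>0 < a\<close> _ \<open>0 \<le> t\<close>] \<open>x 0 \<in> trap a \<tau>\<close>
  by (simp add: trap_def)

lemma trap_contains_cube_nhd:
  assumes "0 < a" "\<tau> < 1"
  obtains d where "0 < d" "\<And>y. y \<in> unit_cube \<Longrightarrow> dist y p_lim < d \<Longrightarrow> y \<in> trap a \<tau>"
proof -
  have "\<forall>\<^sub>F y in nhds p_lim. y $ i < p_eps a $ i \<and> (0 < p_lim $ i \<longrightarrow> \<tau> * p_lim $ i < y $ i)" for i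
  proof -
    have lim: "((\<lambda>y. y $ i) \<longlongrightarrow> p_lim $ i) (nhds p_lim)"
      by (intro tendsto_vec_nth filterlim_ident)
    have "\<forall>\<^sub>F y in nhds p_lim. 0 < p_lim $ i \<longrightarrow> \<tau> * p_lim $ i < y $ i"
    proof (cases "0 < p_lim $ i")
      case True
      then have "\<tau> * p_lim $ i < p_lim $ i" using \<open>\<tau> < 1\<close> by simp
      from order_tendstoD(1)[OF lim this] show ?thesis by (rule eventually_mono) simp
    qed simp
    with order_tendstoD(2)[OF lim p_lim_less_p_eps[OF \<open>0 < a\<close>]] show ?thesis
      by (rule eventually_conj)
  qed
  then have "\<forall>\<^sub>F y in nhds p_lim. \<forall>i. y $ i < p_eps a $ i \<and> (0 < p_lim $ i \<longrightarrow> \<tau> * p_lim $ i < y $ i)"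
    by (rule eventually_all_finite)
  then obtain d where "0 < d" and d: "\<And>y. dist y p_lim < d \<Longrightarrow>
      \<forall>i. y $ i < p_eps a $ i \<and> (0 < p_lim $ i \<longrightarrow> \<tau> * p_lim $ i < y $ i)"
    unfolding eventually_nhds_metric by blast
  have "y \<in> trap a \<tau>" if "y \<in> unit_cube" "dist y p_lim < d" for y
  proof -
    have "\<tau> * p_lim $ i \<le> y $ i \<and> y $ i \<le> p_eps a $ i" for i
      using d[OF that(2)] that(1) p_lim_nonneg[of i]
      by (cases "0 < p_lim $ i") (auto simp: unit_cube_def less_imp_le)
    then show ?thesis by (simp add: trap_def)
  qed
  with \<open>0 < d\<close> show ?thesis by (rule that)
qed

lemma trap_small:
  assumes "0 < e" "0 < a0" "\<tau>0 < 1"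
  obtains a \<tau> where "0 < a" "a \<le> a0" "\<tau>0 \<le> \<tau>" "\<tau> < 1" "\<And>y. y \<in> trap a \<tau> \<Longrightarrow> dist y p_lim < e"
proof -
  have "\<forall>\<^sub>F a in at_right 0. dist (p_eps a) p_lim < e / 2"
    using p_eps_tendsto_p_lim \<open>0 < e\<close> by (intro tendstoD) auto
  then obtain b where "0 < b" and b: "\<And>a. 0 < a \<Longrightarrow> a < b \<Longrightarrow> dist (p_eps a) p_lim < e / 2"
    unfolding eventually_at_right_field by auto
  define a where "a = min a0 (b / 2)"
  define \<tau> where "\<tau> = max \<tau>0 (1 - e / (2 * (norm p_lim + 1)))"
  have "0 < norm p_lim + 1" using norm_ge_zero[of p_lim] by linarith
  then have gap_pos: "0 < e / (2 * (norm p_lim + 1))" using \<open>0 < e\<close> by simp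
  then have "0 < a" "a \<le> a0" "\<tau>0 \<le> \<tau>" "\<tau> < 1"
    using assms \<open>0 < b\<close> by (auto simp: a_def \<tau>_def)
  have "p_lim - \<tau> *\<^sub>R p_lim = (1 - \<tau>) *\<^sub>R p_lim" by (simp add: algebra_simps)
  then have "dist p_lim (\<tau> *\<^sub>R p_lim) = (1 - \<tau>) * norm p_lim"
    using \<open>\<tau> < 1\<close> by (simp add: dist_norm)
  also have "\<dots> \<le> e / (2 * (norm p_lim + 1)) * (norm p_lim + 1)"
    using gap_pos by (intro mult_mono) (auto simp: \<tau>_def)
  also have "\<dots> = e / 2" using \<open>0 < norm p_lim + 1\<close> by (simp add: field_simps)
  finally have "dist p_lim (\<tau> *\<^sub>R p_lim) \<le> e / 2" .
  moreover have "dist (p_eps a) p_lim < e / 2" using \<open>0 < a\<close> \<open>0 < b\<close> by (intro b) (auto simp: a_def)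
  moreover have "dist y p_lim \<le> dist (p_eps a) (\<tau> *\<^sub>R p_lim)" if "y \<in> trap a \<tau>" for y
  proof (rule dist_le_dist_corners)
    show "(\<tau> *\<^sub>R p_lim) $ i \<le> y $ i \<and> y $ i \<le> p_eps a $ i" for i
      using that by (simp add: trap_def)
    show "(\<tau> *\<^sub>R p_lim) $ i \<le> p_lim $ i \<and> p_lim $ i \<le> p_eps a $ i" for i
      using \<open>\<tau> < 1\<close> mult_right_mono[of \<tau> 1 "p_lim $ i"] p_lim_nonneg[of i]
        p_lim_le_p_eps[OF \<open>0 < a\<close>] by auto
  qed
  ultimately have "dist y p_lim < e" if "y \<in> trap a \<tau>" for y
    using that dist_triangle[of "p_eps a" "\<tau> *\<^sub>R p_lim" p_lim] by fastforce
  with \<open>0 < a\<close> \<open>a \<le> a0\<close> \<open>\<tau>0 \<le> \<tau>\<close> \<open>\<tau> < 1\<close> show ?thesis by (rule that)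
qed

lemma p_lim_stable: "stable_equilibrium F p_lim"
  unfolding stable_equilibrium_def
proof (intro conjI allI impI)
  show "p_lim \<in> unit_cube"
    using p_lim_nonneg p_lim_less_one by (simp add: unit_cube_def less_imp_le)
  show "F p_lim = 0" using field_scaled_p_lim[of 1] by (simp add: vec_eq_iff)
next
  fix e :: real assume "0 < e"
  have "(1 :: real) / 2 < 1" by simp
  then obtain a \<tau> where "0 < a" "1 / 2 \<le> \<tau>" "\<tau> < 1"
    and small: "\<And>y. y \<in> trap a \<tau> \<Longrightarrow> dist y p_lim < e"
    using trap_small[OF \<open>0 < e\<close> zero_less_one] by blast
  then have "0 < \<tau>" by simp
  obtain d where "0 < d" and d: "\<And>y. y \<in> unit_cube \<Longrightarrow> dist y p_lim < d \<Longrightarrow> y \<in> trap a \<tau>"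
    using trap_contains_cube_nhd[OF \<open>0 < a\<close> \<open>\<tau> < 1\<close>] by blast
  show "\<exists>d>0. \<forall>x. is_solution F x \<and> x 0 \<in> unit_cube \<and> dist (x 0) p_lim < d
      \<longrightarrow> (\<forall>t\<ge>0. dist (x t) p_lim < e)"
    using \<open>0 < d\<close> d small trap_forward_invariant \<open>0 < a\<close> \<open>0 < \<tau>\<close> \<open>\<tau> < 1\<close> by blast
next
  obtain d where "0 < d" and d: "\<And>y. y \<in> unit_cube \<Longrightarrow> dist y p_lim < d \<Longrightarrow> y \<in> trap 1 (1 / 2)"
    using trap_contains_cube_nhd[of 1 "1 / 2"] by auto
  have "(x \<longlongrightarrow> p_lim) at_top"
    if sol: "is_solution F x" and "x 0 \<in> unit_cube" "x 0 \<in> trap 1 (1 / 2)" for x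
  proof (rule tendstoI)
    fix e :: real assume "0 < e"
    obtain a \<tau> where "0 < a" "a \<le> 1" "1 / 2 \<le> \<tau>" "\<tau> < 1"
      and small: "\<And>y. y \<in> trap a \<tau> \<Longrightarrow> dist y p_lim < e"
      using trap_small[OF \<open>0 < e\<close>, of 1 "1 / 2"] by auto
    have "\<forall>\<^sub>F t in at_top. \<forall>i. x t $ i \<le> p_eps a $ i"
      using that \<open>0 < a\<close> \<open>a \<le> 1\<close> by (intro eventually_below_p_eps) (auto simp: trap_def)
    moreover have "\<forall>\<^sub>F t in at_top. \<forall>i. \<tau> * p_lim $ i \<le> x t $ i"
      using that \<open>1 / 2 \<le> \<tau>\<close> \<open>\<tau> < 1\<close>
      by (intro eventually_above_scaled_p_lim[where \<sigma> = "1 / 2"]) (auto simp: trap_def)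
    ultimately show "\<forall>\<^sub>F t in at_top. dist (x t) p_lim < e"
      by eventually_elim (auto simp: trap_def intro: small)
  qed
  then show "\<exists>d>0. \<forall>x. is_solution F x \<and> x 0 \<in> unit_cube \<and> dist (x 0) p_lim < d
      \<longrightarrow> (x \<longlongrightarrow> p_lim) at_top"
    using \<open>0 < d\<close> d by blast
qed

end

theorem proposition3:
  fixes B :: "real^'n^'n" and lam delta s :: "real^'n"
    and q :: "'n \<Rightarrow> real \<Rightarrow> real" and S :: "(real^'n) set"
    and eps :: "nat \<Rightarrow> real"
  assumes B_nonneg: "\<forall>i j. B $ i $ j \<ge> 0"
    and B_diag: "\<forall>i. B $ i $ i = 0"
    and B_conn: "weakly_connected B"
    and lam_nonneg: "\<forall>i. lam $ i \<ge> 0"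
    and delta_pos: "\<forall>i. delta $ i > 0"
    and q_range: "\<forall>i. \<forall>x\<ge>0. 0 < q i x \<and> q i x \<le> 1"
    and q_decr: "\<forall>i. \<forall>x y. 0 \<le> x \<and> x \<le> y \<longrightarrow> q i y \<le> q i x"
    and q_convex: "\<forall>i. strictly_convex_on {0..} (q i)"
    and q_C1: "\<forall>i. \<exists>q'. continuous_on {0..} q' \<and>
                   (\<forall>x\<ge>0. (q i has_real_derivative q' x) (at x within {0..}))"
    and S_convex: "convex S"
    and S_nonneg: "\<forall>v\<in>S. \<forall>i. v $ i \<ge> 0"
    and s_in: "s \<in> S"
    and stable_unique: "\<exists>!p. stable_equilibrium (field B lam delta q s) p"
    and pos_unique: "\<forall>e>0. \<exists>!p. (\<forall>i. p $ i > 0) \<and> eq_map B (lam + e *\<^sub>R 1) delta q s p = 0"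
    and eps_pos: "\<forall>l. eps l > 0"
    and eps_decr: "decseq eps"
    and eps_lim: "eps \<longlonglongrightarrow> 0"
  shows "(\<lambda>l. pbar_eps B lam delta q s (eps l)) \<longlonglongrightarrow> pbar B lam delta q s"
proof -
  interpret sis_model B lam delta s q
    using B_nonneg lam_nonneg delta_pos q_range S_nonneg s_in pos_unique
    by unfold_locales auto
  have "pbar B lam delta q s = p_lim"
    unfolding pbar_def by (rule the1_equality[OF stable_unique p_lim_stable])
  moreover have "filterlim eps (at_right 0) sequentially"
    using eps_lim eps_pos by (intro tendsto_imp_filterlim_at_right) auto
  ultimately show ?thesis
    using filterlim_compose[OF p_eps_tendsto_p_lim] by simp
qed

end
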